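(* Let $G\curvearrowright X$ and $H\curvearrowright Y$ be group actions with $\mathrm{Con}(H\curvearrowright Y)\subseteq\mathrm{Con}(G\curvearrowright X)$. Then $\tau(G\curvearrowright X)\le\tau(H\curvearrowright Y)$.
   Context: For an action $G\curvearrowright X$, an ordered tuple $\mathfrak{g}=(g_1,\dots,g_n)$ of elements of $G$ and a finite partition $\mathcal{E}=\{E_1,\dots,E_m\}$ of $X$ (a configuration pair), a configuration is a tuple $C=(C_0,\dots,C_n)\in\{1,\dots,m\}^{n+1}$ such that some $x\in E_{C_0}$ satisfies $g_i\cdot x\in E_{C_i}$ for $i=1,\dots,n$; the set of these is $\mathrm{Con}(\mathfrak{g},\mathcal{E};X)$, and $\mathrm{Con}(G\curvearrowright X)=\{\mathrm{Con}(\mathfrak{g},\mathcal{E};X): (\mathfrak{g},\mathcal{E})\text{ a configuration pair}\}$. A paradoxical decomposition of $G\curvearrowright X$ consists of pairwise disjoint subsets $A_1,\dots,A_n,B_1,\dots,B_m$ of $X$ and elements $g_1,\dots,g_n,h_1,\dots,h_m\in G$ with $X=\bigcup_{i=1}^n g_iA_i=\bigcup_{j=1}^m h_jB_j$. The Tarski number $\tau(G\curvearrowright X)$ is the minimal number of pieces $n+m$ in such a decomposition, and $\infty$ if none exists. *)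

theory Defs
  imports "HOL-Algebra.Group_Action" "HOL-Library.Extended_Nat"
begin

definition is_partition_list :: "'b set list \<Rightarrow> 'b set \<Rightarrow> bool" where
  "is_partition_list Es X \<longleftrightarrow>
     (\<forall>i < length Es. Es ! i \<noteq> {} \<and> Es ! i \<subseteq> X) \<and>
     (\<forall>i < length Es. \<forall>j < length Es. i \<noteq> j \<longrightarrow> Es ! i \<inter> Es ! j = {}) \<and>
     (\<Union>i < length Es. Es ! i) = X"

definition config_pair :: "('a, 'c) monoid_scheme \<Rightarrow> 'b set \<Rightarrow> 'a list \<Rightarrow> 'b set list \<Rightarrow> bool" where
  "config_pair G X gs Es \<longleftrightarrow> gs \<noteq> [] \<and> set gs \<subseteq> carrier G \<and> is_partition_list Es X"

definition Con :: "('a \<Rightarrow> 'b \<Rightarrow> 'b) \<Rightarrow> 'a list \<Rightarrow> 'b set list \<Rightarrow> nat list set" where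
  "Con \<phi> gs Es = {C. length C = Suc (length gs) \<and> (\<forall>i < length C. C ! i < length Es) \<and>
      (\<exists>x \<in> Es ! (C ! 0). \<forall>i < length gs. \<phi> (gs ! i) x \<in> Es ! (C ! Suc i))}"

definition Con_action :: "('a, 'c) monoid_scheme \<Rightarrow> 'b set \<Rightarrow> ('a \<Rightarrow> 'b \<Rightarrow> 'b) \<Rightarrow> nat list set set" where
  "Con_action G X \<phi> = {Con \<phi> gs Es | gs Es. config_pair G X gs Es}"

definition paradoxical_decomposition ::
  "('a, 'c) monoid_scheme \<Rightarrow> 'b set \<Rightarrow> ('a \<Rightarrow> 'b \<Rightarrow> 'b) \<Rightarrow>
   'b set list \<Rightarrow> 'a list \<Rightarrow> 'b set list \<Rightarrow> 'a list \<Rightarrow> bool" where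
  "paradoxical_decomposition G X \<phi> As gs Bs hs \<longleftrightarrow>
     length gs = length As \<and> length hs = length Bs \<and>
     set gs \<subseteq> carrier G \<and> set hs \<subseteq> carrier G \<and>
     (\<forall>S \<in> set (As @ Bs). S \<subseteq> X) \<and>
     (\<forall>i < length (As @ Bs). \<forall>j < length (As @ Bs). i \<noteq> j \<longrightarrow> (As @ Bs) ! i \<inter> (As @ Bs) ! j = {}) \<and>
     X = (\<Union>i < length As. \<phi> (gs ! i) ` (As ! i)) \<and>
     X = (\<Union>j < length Bs. \<phi> (hs ! j) ` (Bs ! j))"

definition tarski_number :: "('a, 'c) monoid_scheme \<Rightarrow> 'b set \<Rightarrow> ('a \<Rightarrow> 'b \<Rightarrow> 'b) \<Rightarrow> enat" where
  "tarski_number G X \<phi> = Inf {enat (length As + length Bs) | As gs Bs hs.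
      paradoxical_decomposition G X \<phi> As gs Bs hs}"

end

(*
  Let the pieces P_i of a paradoxical decomposition of Y be moved by t_i. Partition Y into blocks
  E_c, each contained in or disjoint from every piece, and consider the configuration pair
  ((t_1^-1, ..., t_N^-1, 1), E). By hypothesis some configuration pair ((k_1, ..., k_N+1), F) for X
  has exactly the same configurations, so block labels of F correspond to those of E. Let P'_i be
  the union of the blocks F_c with E_c contained in P_i. The configuration of a point x of X is
  realised by some y in Y; if y lies in t_i P_i, then t_i^-1 y lies in P_i and in the block of E
  carrying the label of k_i x, so k_i x lies in P'_i. Hence the sets P'_i, moved by the k_i^-1,
  form a paradoxical decomposition of X with the same number of pieces.
*)
theory Submission
  imports Defs
begin

lemma group_action_group: "group_action G X \<phi> \<Longrightarrow> group G"
  using group_action.group_hom group_hom.axioms(1) by blast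

definition block_index :: "'b set list \<Rightarrow> 'b \<Rightarrow> nat" where
  "block_index Es x = (THE c. c < length Es \<and> x \<in> Es ! c)"

lemma is_partition_list_unique_block:
  assumes "is_partition_list Es X" "x \<in> X"
  shows "\<exists>!c. c < length Es \<and> x \<in> Es ! c"
proof -
  obtain c where c: "c < length Es" "x \<in> Es ! c"
    using assms unfolding is_partition_list_def by blast
  moreover have "d = c" if "d < length Es" "x \<in> Es ! d" for d
    using assms(1) c that unfolding is_partition_list_def by blast
  ultimately show ?thesis by blast
qed

lemma block_index_spec:
  assumes "is_partition_list Es X" "x \<in> X"
  shows "block_index Es x < length Es \<and> x \<in> Es ! block_index Es x"
  unfolding block_index_def using theI'[OF is_partition_list_unique_block[OF assms]] .

lemma is_partition_list_fibers:
  assumes "finite (f ` Y)"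
  obtains Es where "is_partition_list Es Y" "\<forall>c<length Es. \<forall>y\<in>Es ! c. \<forall>z\<in>Es ! c. f y = f z"
proof -
  obtain l where l: "distinct l" "set l = f ` Y"
    using finite_distinct_list[OF assms] by metis
  define Es where "Es = map (\<lambda>v. {y\<in>Y. f y = v}) l"
  have "is_partition_list Es Y"
    unfolding is_partition_list_def
  proof (intro conjI allI impI)
    fix i assume "i < length Es"
    then have "l ! i \<in> f ` Y" using l(2) by (metis Es_def length_map nth_mem)
    then show "Es ! i \<noteq> {}" "Es ! i \<subseteq> Y" using \<open>i < length Es\<close> by (auto simp: Es_def)
  next
    fix i j assume "i < length Es" "j < length Es" "i \<noteq> j"
    then show "Es ! i \<inter> Es ! j = {}" using l(1) by (auto simp: Es_def nth_eq_iff_index_eq)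
  next
    have "y \<in> (\<Union>i<length Es. Es ! i)" if "y \<in> Y" for y
    proof -
      obtain i where "i < length l" "l ! i = f y" using l(2) \<open>y \<in> Y\<close> by (metis imageI in_set_conv_nth)
      then show ?thesis using \<open>y \<in> Y\<close> by (auto simp: Es_def intro!: bexI[of _ i])
    qed
    then show "(\<Union>i<length Es. Es ! i) = Y" by (auto simp: Es_def)
  qed
  moreover have "\<forall>c<length Es. \<forall>y\<in>Es ! c. \<forall>z\<in>Es ! c. f y = f z" by (simp add: Es_def)
  ultimately show ?thesis using that by blast
qed

lemma is_partition_list_refining:
  obtains Es where "is_partition_list Es Y" "\<forall>c<length Es. \<forall>S\<in>set Ps. Es ! c \<inter> S \<noteq> {} \<longrightarrow> Es ! c \<subseteq> S"
proof -
  have "finite ((\<lambda>y. {S\<in>set Ps. y \<in> S}) ` Y)"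
    by (rule finite_subset[of _ "Pow (set Ps)"]) auto
  then obtain Es where partition: "is_partition_list Es Y"
    and fib: "\<forall>c<length Es. \<forall>y\<in>Es ! c. \<forall>z\<in>Es ! c. {S\<in>set Ps. y \<in> S} = {S\<in>set Ps. z \<in> S}"
    by (rule is_partition_list_fibers)
  show ?thesis
  proof (rule that[OF partition], intro allI impI ballI)
    fix c S assume "c < length Es" "S \<in> set Ps" "Es ! c \<inter> S \<noteq> {}"
    then show "Es ! c \<subseteq> S" using fib by blast
  qed
qed

definition configuration :: "('a \<Rightarrow> 'b \<Rightarrow> 'b) \<Rightarrow> 'a list \<Rightarrow> 'b set list \<Rightarrow> 'b \<Rightarrow> nat list" where
  "configuration \<phi> gs Es x = map (block_index Es) (x # map (\<lambda>g. \<phi> g x) gs)"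

lemma configuration_in_Con:
  assumes "group_action G X \<phi>" "config_pair G X gs Es" "x \<in> X"
  shows "configuration \<phi> gs Es x \<in> Con \<phi> gs Es"
proof -
  have Es: "is_partition_list Es X" and gs: "set gs \<subseteq> carrier G"
    using assms(2) unfolding config_pair_def by auto
  have "\<phi> (gs ! i) x \<in> X" if "i < length gs" for i
    using group_action.element_image[OF assms(1) _ assms(3) refl] gs that nth_mem by blast
  then show ?thesis
    using block_index_spec[OF Es] assms(3)
    by (auto simp: Con_def configuration_def nth_Cons' intro!: bexI[of _ x])
qed

lemma Con_empty:
  assumes "is_partition_list F {}"
  shows "Con \<phi> ks F = {}"
proof -
  have "F = []"
  proof (rule ccontr)
    assume "F \<noteq> []"
    then have "F ! 0 \<noteq> {}" "F ! 0 \<subseteq> {}"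
      using assms unfolding is_partition_list_def by auto
    then show False by blast
  qed
  then show ?thesis by (auto simp: Con_def)
qed

lemma Con_action_subsetD:
  assumes gaG: "group_action G X \<phi>" and sub: "Con_action H Y \<psi> \<subseteq> Con_action G X \<phi>"
    and cpH: "config_pair H Y gs E"
  obtains ks F where "config_pair G X ks F" "length ks = length gs" "Con \<phi> ks F = Con \<psi> gs E"
proof -
  have "Con \<psi> gs E \<in> Con_action G X \<phi>"
    using sub cpH unfolding Con_action_def by blast
  then obtain ks F where cpG: "config_pair G X ks F" and eq: "Con \<phi> ks F = Con \<psi> gs E"
    unfolding Con_action_def by blast
  show ?thesis
  proof (cases "X = {}")
    case True
    \<comment> \<open>For empty X every Con is empty, so any tuple of the right length will do.\<close>
    define ones where "ones = replicate (length gs) \<one>\<^bsub>G\<^esub>"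
    have "config_pair G X ones F"
      using cpG cpH group.is_monoid[OF group_action_group[OF gaG]]
      by (auto simp: config_pair_def ones_def)
    moreover have "length ones = length gs"
      by (simp add: ones_def)
    moreover have "Con \<phi> ones F = Con \<phi> ks F"
      using cpG True by (simp add: config_pair_def Con_empty)
    ultimately show ?thesis
      using eq by (metis that)
  next
    case False
    then obtain x where "x \<in> X" by blast
    then have "configuration \<phi> ks F x \<in> Con \<psi> gs E"
      using configuration_in_Con[OF gaG cpG] eq by blast
    then have "length ks = length gs"
      unfolding Con_def by (simp add: configuration_def)
    then show ?thesis by (rule that[OF cpG _ eq])
  qed
qed

lemma Con_subset_realisation:
  assumes "group_action G X \<phi>" "config_pair G X ks F" "is_partition_list E Y"
    and "Con \<phi> ks F \<subseteq> Con \<psi> gs E" and "x \<in> X"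
  obtains y where "y \<in> Y"
    and "\<And>i. i < length gs \<Longrightarrow> block_index F (\<phi> (ks ! i) x) < length E"
    and "\<And>i. i < length gs \<Longrightarrow> \<psi> (gs ! i) y \<in> E ! block_index F (\<phi> (ks ! i) x)"
proof -
  let ?C = "configuration \<phi> ks F x"
  have "?C \<in> Con \<psi> gs E"
    using assms(4) configuration_in_Con[OF assms(1,2,5)] by blast
  then obtain y where len: "length ?C = Suc (length gs)" and lt: "\<forall>i<length ?C. ?C ! i < length E"
    and y: "y \<in> E ! (?C ! 0)" and img: "\<forall>i<length gs. \<psi> (gs ! i) y \<in> E ! (?C ! Suc i)"
    unfolding Con_def by blast
  have "?C ! 0 < length E"
    using lt[rule_format, of 0] by (simp add: configuration_def)
  then have "y \<in> Y"
    using y assms(3) unfolding is_partition_list_def by blast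
  moreover have "length ks = length gs"
    using len by (simp add: configuration_def)
  then have "?C ! Suc i = block_index F (\<phi> (ks ! i) x)" if "i < length gs" for i
    using that by (simp add: configuration_def)
  moreover have "?C ! Suc i < length E" if "i < length gs" for i
    using lt len that by simp
  ultimately show ?thesis
    using that img by simp
qed

definition transfer_piece :: "'c set list \<Rightarrow> 'b set list \<Rightarrow> 'c set \<Rightarrow> 'b set" where
  "transfer_piece E F S = (\<Union>c \<in> {c. c < length E \<and> c < length F \<and> E ! c \<subseteq> S}. F ! c)"

lemma transfer_piece_subset:
  "is_partition_list F X \<Longrightarrow> transfer_piece E F S \<subseteq> X"
  unfolding transfer_piece_def is_partition_list_def by blast

lemma transfer_piece_disjoint:
  assumes E: "is_partition_list E Y" and F: "is_partition_list F X" and "S \<inter> S' = {}"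
  shows "transfer_piece E F S \<inter> transfer_piece E F S' = {}"
proof (rule ccontr)
  assume "transfer_piece E F S \<inter> transfer_piece E F S' \<noteq> {}"
  then obtain x c d where "x \<in> F ! c" "c < length F" "c < length E" "E ! c \<subseteq> S"
    and "x \<in> F ! d" "d < length F" "E ! d \<subseteq> S'"
    unfolding transfer_piece_def by blast
  moreover from calculation have "c = d"
    using F unfolding is_partition_list_def by blast
  moreover have "E ! c \<noteq> {}"
    using E \<open>c < length E\<close> unfolding is_partition_list_def by blast
  ultimately show False using \<open>S \<inter> S' = {}\<close> by blast
qed

lemma transfer_pieces_pairwise_disjoint:
  assumes "is_partition_list E Y" "is_partition_list F X"
    and "\<forall>i<length Ps. \<forall>j<length Ps. i \<noteq> j \<longrightarrow> Ps ! i \<inter> Ps ! j = {}"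
  shows "\<forall>i<length (map (transfer_piece E F) Ps). \<forall>j<length (map (transfer_piece E F) Ps). i \<noteq> j \<longrightarrow>
    map (transfer_piece E F) Ps ! i \<inter> map (transfer_piece E F) Ps ! j = {}"
  using assms(3) by (simp add: transfer_piece_disjoint[OF assms(1,2)])

lemma translate_transfer_piece_subset:
  assumes "group_action G X \<phi>" "is_partition_list F X" "k \<in> carrier G"
  shows "\<phi> (inv\<^bsub>G\<^esub> k) ` transfer_piece E F S \<subseteq> X"
  using group_action.element_image[OF assms(1)] group.inv_closed[OF group_action_group[OF assms(1)] assms(3)]
    transfer_piece_subset[OF assms(2)] by blast

lemma translates_transfer_pieces_cover:
  assumes gaG: "group_action G X \<phi>" and gaH: "group_action H Y \<psi>"
    and cpG: "config_pair G X ks F" and E: "is_partition_list E Y" and len: "length ks = length gs"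
    and Con: "Con \<phi> ks F \<subseteq> Con \<psi> gs E"
    and refines: "\<forall>c<length E. \<forall>S\<in>set Ps. E ! c \<inter> S \<noteq> {} \<longrightarrow> E ! c \<subseteq> S"
    and Ps: "\<forall>S\<in>set Ps. S \<subseteq> Y" and ts: "set ts \<subseteq> carrier H" "length ts = length Ps"
    and gs: "off + length Ps \<le> length gs" "\<forall>j<length Ps. gs ! (off + j) = inv\<^bsub>H\<^esub> (ts ! j)"
    and cover: "Y = (\<Union>j<length Ps. \<psi> (ts ! j) ` (Ps ! j))"
  shows "X = (\<Union>j<length Ps. \<phi> (inv\<^bsub>G\<^esub> (ks ! (off + j))) ` transfer_piece E F (Ps ! j))"
proof
  have F: "is_partition_list F X" and ks: "set ks \<subseteq> carrier G"
    using cpG unfolding config_pair_def by auto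
  have "ks ! (off + j) \<in> carrier G" if "j < length Ps" for j
    using that len gs(1) ks nth_mem by (metis add_less_cancel_left order_less_le_trans subsetD)
  then show "(\<Union>j<length Ps. \<phi> (inv\<^bsub>G\<^esub> (ks ! (off + j))) ` transfer_piece E F (Ps ! j)) \<subseteq> X"
    using translate_transfer_piece_subset[OF gaG F] by blast
  show "X \<subseteq> (\<Union>j<length Ps. \<phi> (inv\<^bsub>G\<^esub> (ks ! (off + j))) ` transfer_piece E F (Ps ! j))"
  proof
    fix x assume x: "x \<in> X"
    obtain y where y: "y \<in> Y"
      and lt: "\<And>i. i < length gs \<Longrightarrow> block_index F (\<phi> (ks ! i) x) < length E"
      and img: "\<And>i. i < length gs \<Longrightarrow> \<psi> (gs ! i) y \<in> E ! block_index F (\<phi> (ks ! i) x)"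
      using Con_subset_realisation[OF gaG cpG E Con x] by blast
    have "y \<in> (\<Union>j<length Ps. \<psi> (ts ! j) ` (Ps ! j))"
      using cover y by simp
    then obtain j a where j: "j < length Ps" and a: "a \<in> Ps ! j" and ya: "\<psi> (ts ! j) a = y"
      by blast
    define i where "i = off + j"
    have i: "i < length gs" "i < length ks" using j gs(1) len by (simp_all add: i_def)
    define c where "c = block_index F (\<phi> (ks ! i) x)"
    have "a = \<psi> (gs ! i) y"
      using group_action.orbit_sym_aux[OF gaH _ _ ya] ts j a Ps gs(2) nth_mem
      by (metis i_def subsetD)
    then have "E ! c \<inter> Ps ! j \<noteq> {}" using img[OF i(1)] a by (auto simp: c_def)
    then have "E ! c \<subseteq> Ps ! j" using refines lt[OF i(1)] j nth_mem by (metis c_def)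
    moreover have kx: "\<phi> (ks ! i) x \<in> X" and "ks ! i \<in> carrier G"
      using group_action.element_image[OF gaG _ x refl] ks i(2) nth_mem by blast+
    ultimately have "\<phi> (ks ! i) x \<in> transfer_piece E F (Ps ! j)"
      using block_index_spec[OF F kx] lt[OF i(1)] by (auto simp: transfer_piece_def c_def)
    moreover have "x = \<phi> (inv\<^bsub>G\<^esub> (ks ! i)) (\<phi> (ks ! i) x)"
      using group_action.orbit_sym_aux[OF gaG \<open>ks ! i \<in> carrier G\<close> x refl] by simp
    ultimately show "x \<in> (\<Union>j<length Ps. \<phi> (inv\<^bsub>G\<^esub> (ks ! (off + j))) ` transfer_piece E F (Ps ! j))"
      using j by (auto simp: i_def)
  qed
qed

lemma paradoxical_decomposition_transfer_pieces:
  assumes gaG: "group_action G X \<phi>" and gaH: "group_action H Y \<psi>"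
    and pd: "paradoxical_decomposition H Y \<psi> As gs Bs hs"
    and E: "is_partition_list E Y"
    and refines: "\<forall>c<length E. \<forall>S\<in>set (As @ Bs). E ! c \<inter> S \<noteq> {} \<longrightarrow> E ! c \<subseteq> S"
    and cpG: "config_pair G X ks F" and len: "length ks = length gsH"
    and gsH: "gsH = map (\<lambda>g. inv\<^bsub>H\<^esub> g) (gs @ hs) @ [\<one>\<^bsub>H\<^esub>]"
    and Con: "Con \<phi> ks F \<subseteq> Con \<psi> gsH E"
  shows "paradoxical_decomposition G X \<phi>
    (map (transfer_piece E F) As) (map (\<lambda>j. inv\<^bsub>G\<^esub> (ks ! j)) [0..<length As])
    (map (transfer_piece E F) Bs) (map (\<lambda>j. inv\<^bsub>G\<^esub> (ks ! (length As + j))) [0..<length Bs])"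
    (is "paradoxical_decomposition G X \<phi> ?As' ?gs' ?Bs' ?hs'")
proof -
  let ?Ps = "As @ Bs" and ?tp = "transfer_piece E F"
  have lengths: "length gs = length As" "length hs = length Bs"
    and carrier: "set gs \<subseteq> carrier H" "set hs \<subseteq> carrier H"
    and pieces: "\<forall>S\<in>set ?Ps. S \<subseteq> Y"
    and disjoint: "\<forall>i<length ?Ps. \<forall>j<length ?Ps. i \<noteq> j \<longrightarrow> ?Ps ! i \<inter> ?Ps ! j = {}"
    and coverA: "Y = (\<Union>j<length As. \<psi> (gs ! j) ` (As ! j))"
    and coverB: "Y = (\<Union>j<length Bs. \<psi> (hs ! j) ` (Bs ! j))"
    using pd unfolding paradoxical_decomposition_def by meson+
  have F: "is_partition_list F X" and ks: "set ks \<subseteq> carrier G"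
    using cpG unfolding config_pair_def by auto
  have invH: "\<forall>j<length As. gsH ! (0 + j) = inv\<^bsub>H\<^esub> (gs ! j)"
    "\<forall>j<length Bs. gsH ! (length As + j) = inv\<^bsub>H\<^esub> (hs ! j)"
    using lengths by (simp_all add: gsH nth_append)
  have offsets: "0 + length As \<le> length gsH" "length As + length Bs \<le> length gsH"
    using lengths by (simp_all add: gsH)
  have "\<forall>c<length E. \<forall>S\<in>set As. E ! c \<inter> S \<noteq> {} \<longrightarrow> E ! c \<subseteq> S"
    "\<forall>c<length E. \<forall>S\<in>set Bs. E ! c \<inter> S \<noteq> {} \<longrightarrow> E ! c \<subseteq> S"
    "\<forall>S\<in>set As. S \<subseteq> Y" "\<forall>S\<in>set Bs. S \<subseteq> Y"
    using refines pieces by simp_all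
  note cover = translates_transfer_pieces_cover[OF gaG gaH cpG E len Con]
  have "inv\<^bsub>G\<^esub> (ks ! i) \<in> carrier G" if "i < length As + length Bs" for i
  proof -
    have "i < length ks" using that len offsets(2) by (simp add: gsH)
    then show ?thesis
      using ks nth_mem group.inv_closed[OF group_action_group[OF gaG]] by blast
  qed
  then have carrier': "set ?gs' \<subseteq> carrier G" "set ?hs' \<subseteq> carrier G"
    by auto
  show ?thesis
    unfolding paradoxical_decomposition_def
  proof (intro conjI)
    show "\<forall>S\<in>set (?As' @ ?Bs'). S \<subseteq> X"
      using transfer_piece_subset[OF F] by auto
    show "\<forall>i<length (?As' @ ?Bs'). \<forall>j<length (?As' @ ?Bs'). i \<noteq> j \<longrightarrow>
        (?As' @ ?Bs') ! i \<inter> (?As' @ ?Bs') ! j = {}"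
      using transfer_pieces_pairwise_disjoint[OF E F disjoint] unfolding map_append .
    show "X = (\<Union>i<length ?As'. \<phi> (?gs' ! i) ` (?As' ! i))"
      using cover[OF \<open>\<forall>c<length E. \<forall>S\<in>set As. _\<close> \<open>\<forall>S\<in>set As. S \<subseteq> Y\<close> carrier(1) lengths(1)
          offsets(1) invH(1) coverA] by simp
    show "X = (\<Union>i<length ?Bs'. \<phi> (?hs' ! i) ` (?Bs' ! i))"
      using cover[OF \<open>\<forall>c<length E. \<forall>S\<in>set Bs. _\<close> \<open>\<forall>S\<in>set Bs. S \<subseteq> Y\<close> carrier(2) lengths(2)
          offsets(2) invH(2) coverB] by simp
  qed (use carrier' in simp_all)
qed

lemma paradoxical_decomposition_transfer:
  assumes gaG: "group_action G X \<phi>" and gaH: "group_action H Y \<psi>"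
    and sub: "Con_action H Y \<psi> \<subseteq> Con_action G X \<phi>"
    and pd: "paradoxical_decomposition H Y \<psi> As gs Bs hs"
  obtains As' gs' Bs' hs' where "paradoxical_decomposition G X \<phi> As' gs' Bs' hs'"
    and "length As' = length As" and "length Bs' = length Bs"
proof -
  obtain E where E: "is_partition_list E Y"
    and refines: "\<forall>c<length E. \<forall>S\<in>set (As @ Bs). E ! c \<inter> S \<noteq> {} \<longrightarrow> E ! c \<subseteq> S"
    by (rule is_partition_list_refining)
  \<comment> \<open>The trailing identity only makes the tuple nonempty, as configuration pairs require.\<close>
  define gsH where "gsH = map (\<lambda>g. inv\<^bsub>H\<^esub> g) (gs @ hs) @ [\<one>\<^bsub>H\<^esub>]"
  have "set gs \<subseteq> carrier H" "set hs \<subseteq> carrier H"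
    using pd unfolding paradoxical_decomposition_def by simp_all
  then have "config_pair H Y gsH E"
    using E group.inv_closed[OF group_action_group[OF gaH]] group.is_monoid[OF group_action_group[OF gaH]]
    by (auto simp: config_pair_def gsH_def)
  then obtain ks F where "config_pair G X ks F" "length ks = length gsH" "Con \<phi> ks F = Con \<psi> gsH E"
    using Con_action_subsetD[OF gaG sub] by blast
  then show ?thesis
    using paradoxical_decomposition_transfer_pieces[OF gaG gaH pd E refines _ _ gsH_def] that
    by (metis equalityD1 length_map)
qed

lemma tarski_number_le:
  "paradoxical_decomposition G X \<phi> As gs Bs hs \<Longrightarrow> tarski_number G X \<phi> \<le> enat (length As + length Bs)"
  unfolding tarski_number_def by (rule Inf_lower) blast

theorem mainTheorem6:
  fixes G :: "('a, 'c) monoid_scheme" and X :: "'b set" and \<phi> :: "'a \<Rightarrow> 'b \<Rightarrow> 'b"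
    and H :: "('d, 'e) monoid_scheme" and Y :: "'f set" and \<psi> :: "'d \<Rightarrow> 'f \<Rightarrow> 'f"
  assumes "group_action G X \<phi>" and "group_action H Y \<psi>"
    and "Con_action H Y \<psi> \<subseteq> Con_action G X \<phi>"
  shows "tarski_number G X \<phi> \<le> tarski_number H Y \<psi>"
  unfolding tarski_number_def [of H]
proof (rule Inf_greatest, clarify)
  fix As gs Bs hs
  assume "paradoxical_decomposition H Y \<psi> As gs Bs hs"
  then obtain As' gs' Bs' hs' where "paradoxical_decomposition G X \<phi> As' gs' Bs' hs'"
    and "length As' = length As" "length Bs' = length Bs"
    using paradoxical_decomposition_transfer[OF assms] by blast
  then show "tarski_number G X \<phi> \<le> enat (length As + length Bs)"
    using tarski_number_le by metis
qed

end
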